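(* Under Assumptions A1 and A2, for every compact set $B\subset(0,\infty)^2$, $$\lim_{t\to\infty}\sup_{(x,y)\in B}\Big|\frac{\widehat C_v\big(\overline F(xt),\overline F(yt)\big)}{\big(\overline F(t)\big)^{\kappa-1}\ell\big(\overline F(t)\big)}-\tau_v\big(x^{-\alpha},y^{-\alpha}\big)\Big|=0.$$
   Context: $\mathrm{RV}_\gamma$: $f(tx)/f(t)\to x^\gamma$ as $t\to\infty$; slowly varying at $0$: $\ell(st)/\ell(t)\to1$ as $t\downarrow0$. Assumption A1: $X,Y$ nonnegative continuous random variables with common distribution function $F$, $\overline F=1-F\in\mathrm{RV}_{-\alpha}$, $\alpha>0$. The survival copula $\widehat C$ satisfies $\Pr(X>x,Y>y)=\widehat C(\overline F(x),\overline F(y))$; $\widehat C_u,\widehat C_v$ its partial derivatives, $\tau_v=\partial\tau/\partial v$. Assumption A2: $\widehat C$ symmetric, twice differentiable on $[0,1]^2$; there exist $\kappa\in[1,2]$, $\ell$ slowly varying at $0$, $\tau\not\equiv0$ continuously differentiable on $[0,\infty)^2$ with $\lim_{t\downarrow0}\widehat C(ut,vt)/(t^\kappa\ell(t))=\tau(u,v)$ for all $u,v\ge0$; $\widehat C_u(u,v)$ nonincreasing in $u$, $\widehat C_v(u,v)$ nonincreasing in $v$. *)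

theory Defs
  imports "HOL-Probability.Probability"
begin

definition regularly_varying :: "(real \<Rightarrow> real) \<Rightarrow> real \<Rightarrow> bool" where
  "regularly_varying f \<gamma> \<longleftrightarrow>
     (\<forall>x>0. ((\<lambda>t. f (t * x) / f t) \<longlongrightarrow> x powr \<gamma>) at_top)"

definition slowly_varying_at_0 :: "(real \<Rightarrow> real) \<Rightarrow> bool" where
  "slowly_varying_at_0 l \<longleftrightarrow>
     (\<forall>t>0. l t > 0) \<and> l \<in> borel_measurable borel \<and>
     (\<forall>s>0. ((\<lambda>t. l (s * t) / l t) \<longlongrightarrow> 1) (at_right 0))"

definition copula :: "(real \<Rightarrow> real \<Rightarrow> real) \<Rightarrow> bool" where
  "copula C \<longleftrightarrow>
     (\<forall>u\<in>{0..1}. \<forall>v\<in>{0..1}. C u v \<in> {0..1}) \<and>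
     (\<forall>u\<in>{0..1}. C u 0 = 0 \<and> C 0 u = 0 \<and> C u 1 = u \<and> C 1 u = u) \<and>
     (\<forall>u1\<in>{0..1}. \<forall>u2\<in>{0..1}. \<forall>v1\<in>{0..1}. \<forall>v2\<in>{0..1}.
        u1 \<le> u2 \<longrightarrow> v1 \<le> v2 \<longrightarrow> C u2 v2 - C u2 v1 - C u1 v2 + C u1 v1 \<ge> 0)"

text \<open>g has partial derivatives gu, gv on S (as a function of the pair), i.e. is
  (Frechet) differentiable within S with gradient (gu, gv).\<close>
definition has_partials_on ::
  "(real \<Rightarrow> real \<Rightarrow> real) \<Rightarrow> (real \<Rightarrow> real \<Rightarrow> real) \<Rightarrow> (real \<Rightarrow> real \<Rightarrow> real)
     \<Rightarrow> (real \<times> real) set \<Rightarrow> bool" where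
  "has_partials_on g gu gv S \<longleftrightarrow>
     (\<forall>(u,v)\<in>S. ((\<lambda>p. g (fst p) (snd p)) has_derivative
        (\<lambda>h. gu u v * fst h + gv u v * snd h)) (at (u,v) within S))"

end

theory Submission
  imports Defs
begin

text \<open>
  Write \<open>s = 1 - F t\<close>. Since the copula is 2-increasing, \<open>Cv\<close> is nondecreasing in its first
  argument, and by A2 it is nonincreasing in its second. Hence \<open>Cv (1 - F (x t)) (1 - F (y t))\<close> lies
  between two difference quotients of \<open>C (a s)\<close> over intervals \<open>[b s, b' s]\<close>, with \<open>a, b, b'\<close>
  close to \<open>x powr -\<alpha>\<close>, \<open>y powr -\<alpha>\<close> uniformly near \<open>(x, y)\<close>, because \<open>1 - F\<close> is monotone and
  regularly varying. After division by \<open>s powr (\<kappa> - 1) * l s\<close> such a quotient tends, by A2, to the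
  difference quotient of \<open>\<tau> a\<close> over \<open>[b, b']\<close>; by the mean value theorem this is a value of
  \<open>\<tau>v\<close> near \<open>(a, b)\<close>, hence close to \<open>\<tau>v (x powr -\<alpha>) (y powr -\<alpha>)\<close>. This gives locally
  uniform convergence, and compactness of \<open>B\<close> makes it uniform.
\<close>

lemma has_partials_on_deriv_snd:
  assumes g: "has_partials_on g gu gv S" and uv: "(u, v) \<in> S"
    and T: "open T" "v \<in> T" "\<And>w. w \<in> T \<Longrightarrow> (u, w) \<in> S"
  shows "((\<lambda>w. g u w) has_real_derivative gv u v) (at v)"
proof -
  have "((\<lambda>p. g (fst p) (snd p)) has_derivative (\<lambda>h. gu u v * fst h + gv u v * snd h))
      (at (u, v) within S)"
    using g uv unfolding has_partials_on_def by auto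
  then have "((\<lambda>p. g (fst p) (snd p)) has_derivative (\<lambda>h. gu u v * fst h + gv u v * snd h))
      (at (u, v) within Pair u ` T)"
    by (rule has_derivative_subset) (use T in auto)
  then have "((\<lambda>p. g (fst p) (snd p)) \<circ> Pair u has_derivative
      (\<lambda>h. gu u v * fst h + gv u v * snd h) \<circ> Pair 0) (at v within T)"
    by (intro diff_chain_within) (auto intro!: derivative_eq_intros)
  then have "((\<lambda>w. g u w) has_derivative (*) (gv u v)) (at v within T)"
    by (simp add: comp_def)
  then show ?thesis
    using at_within_open[OF T(2,1)] by (simp add: has_field_derivative_def)
qed

lemma has_partials_on_quadrant_mvt_snd:
  assumes g: "has_partials_on g gu gv ({0..} \<times> {0..})"
    and "0 \<le> a" "0 < b" "b < b'"
  shows "\<exists>z. b < z \<and> z < b' \<and> (g a b' - g a b) / (b' - b) = gv a z"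
proof -
  have "((\<lambda>w. g a w) has_real_derivative gv a x) (at x)" if "b \<le> x" "x \<le> b'" for x
    by (rule has_partials_on_deriv_snd[OF g, where T = "{0<..}"]) (use assms that in auto)
  from MVT2[OF \<open>b < b'\<close> this] show ?thesis
    using \<open>b < b'\<close> by auto
qed

lemma continuous_on_quadrant_box:
  fixes g :: "real \<times> real \<Rightarrow> real"
  assumes "continuous_on ({0..} \<times> {0..}) g" "0 < a" "0 < b" "0 < e"
  shows "\<exists>d>0. d \<le> a \<and> d \<le> b \<and>
    (\<forall>a' b'. \<bar>a' - a\<bar> < d \<longrightarrow> \<bar>b' - b\<bar> < d \<longrightarrow> \<bar>g (a', b') - g (a, b)\<bar> < e)"
proof -
  have "(a, b) \<in> {0..} \<times> {0..}"
    using assms by simp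
  then obtain d where "d > 0" and d: "\<And>q. q \<in> {0..} \<times> {0..} \<Longrightarrow> dist q (a, b) < d \<Longrightarrow> dist (g q) (g (a, b)) < e"
    using assms(1,4) unfolding continuous_on_iff by blast
  have "\<bar>g (a', b') - g (a, b)\<bar> < e"
    if "\<bar>a' - a\<bar> < min (d / 2) (min a b)" "\<bar>b' - b\<bar> < min (d / 2) (min a b)" for a' b'
  proof -
    have "dist (a', b') (a, b) = sqrt ((dist a' a)\<^sup>2 + (dist b' b)\<^sup>2)"
      by (rule dist_Pair_Pair)
    also have "\<dots> \<le> \<bar>dist a' a\<bar> + \<bar>dist b' b\<bar>"
      by (rule sqrt_sum_squares_le_sum_abs)
    finally have "dist (a', b') (a, b) < d"
      using that by (simp add: dist_real_def)
    moreover have "(a', b') \<in> {0..} \<times> {0..}"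
      using that by (auto simp: abs_less_iff)
    ultimately show ?thesis
      using d by (simp add: dist_real_def)
  qed
  then show ?thesis
    using \<open>d > 0\<close> assms by (intro exI[of _ "min (d / 2) (min a b)"]) auto
qed

lemma difference_quotient_between_antimono_deriv:
  fixes g g' :: "real \<Rightarrow> real"
  assumes ab: "a < b"
    and deriv: "\<And>x. x \<in> {a..b} \<Longrightarrow> (g has_real_derivative g' x) (at x)"
    and anti: "antimono_on {a..b} g'"
  shows "g' b \<le> (g b - g a) / (b - a)" and "(g b - g a) / (b - a) \<le> g' a"
proof -
  obtain z where z: "a < z" "z < b" "g b - g a = (b - a) * g' z"
    using MVT2[OF ab deriv] by auto
  have "(g b - g a) / (b - a) = g' z"
    using z ab by simp
  moreover have "g' b \<le> g' z" "g' z \<le> g' a"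
    using z ab by (auto intro!: monotone_onD[OF anti])
  ultimately show "g' b \<le> (g b - g a) / (b - a)" "(g b - g a) / (b - a) \<le> g' a"
    by simp_all
qed

lemma copula_partial_snd_mono_fst:
  assumes C: "copula C" and C_diff: "has_partials_on C Cu Cv ({0..1} \<times> {0..1})"
    and u: "u1 \<in> {0..1}" "u2 \<in> {0..1}" "u1 \<le> u2" and v: "v \<in> {0<..<1}"
  shows "Cv u1 v \<le> Cv u2 v"
proof -
  have deriv: "((\<lambda>w. C u w) has_real_derivative Cv u v) (at v)" if "u \<in> {0..1}" for u
    by (rule has_partials_on_deriv_snd[OF C_diff, where T = "{0<..<1}"]) (use that v in auto)
  have "mono_on {0..1} (\<lambda>w. C u2 w - C u1 w)"
  proof (rule mono_onI)
    fix w1 w2 :: real assume "w1 \<in> {0..1}" "w2 \<in> {0..1}" "w1 \<le> w2"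
    then have "C u2 w2 - C u2 w1 - C u1 w2 + C u1 w1 \<ge> 0"
      using C u unfolding copula_def by blast
    then show "C u2 w1 - C u1 w1 \<le> C u2 w2 - C u1 w2" by simp
  qed
  from mono_on_imp_deriv_nonneg[OF this DERIV_diff[OF deriv deriv]] show ?thesis
    using u v by simp
qed

lemma copula_partial_snd_between_difference_quotients:
  assumes C: "copula C" and C_diff: "has_partials_on C Cu Cv ({0..1} \<times> {0..1})"
    and Cv_mono: "\<And>u. u \<in> {0..1} \<Longrightarrow> antimono_on {0..1} (\<lambda>v. Cv u v)"
    and u: "0 \<le> u1" "u1 \<le> u" "u \<le> u2" "u2 \<le> 1"
    and w: "0 < v1" "v1 < v1'" "v1' \<le> w" "w \<le> v2" "v2 < v2'" "v2' < 1"
  shows "(C u1 v2' - C u1 v2) / (v2' - v2) \<le> Cv u w"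
    and "Cv u w \<le> (C u2 v1' - C u2 v1) / (v1' - v1)"
proof -
  have quotient_bounds:
    "Cv u' b \<le> (C u' b - C u' a) / (b - a) \<and> (C u' b - C u' a) / (b - a) \<le> Cv u' a"
    if "u' \<in> {0..1}" "0 < a" "a < b" "b < 1" for u' a b
  proof -
    have "((\<lambda>v. C u' v) has_real_derivative Cv u' x) (at x)" if "x \<in> {a..b}" for x
      by (rule has_partials_on_deriv_snd[OF C_diff, where T = "{0<..<1}"])
        (use that \<open>u' \<in> {0..1}\<close> \<open>0 < a\<close> \<open>b < 1\<close> in auto)
    moreover have "antimono_on {a..b} (\<lambda>v. Cv u' v)"
      by (rule monotone_on_subset[OF Cv_mono[OF \<open>u' \<in> {0..1}\<close>]]) (use that in auto)
    ultimately show ?thesis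
      using difference_quotient_between_antimono_deriv[OF \<open>a < b\<close>] by blast
  qed
  have "(C u1 v2' - C u1 v2) / (v2' - v2) \<le> Cv u1 v2"
    using quotient_bounds[of u1 v2 v2'] u w by auto
  also have "\<dots> \<le> Cv u1 w"
    using u w by (auto intro!: monotone_onD[OF Cv_mono])
  also have "\<dots> \<le> Cv u w"
    using u w by (intro copula_partial_snd_mono_fst[OF C C_diff]) auto
  finally show "(C u1 v2' - C u1 v2) / (v2' - v2) \<le> Cv u w" .
  have "Cv u w \<le> Cv u2 w"
    using u w by (intro copula_partial_snd_mono_fst[OF C C_diff]) auto
  also have "\<dots> \<le> Cv u2 v1'"
    using u w by (auto intro!: monotone_onD[OF Cv_mono])
  also have "\<dots> \<le> (C u2 v1' - C u2 v1) / (v1' - v1)"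
    using quotient_bounds[of u2 v1 v1'] u w by auto
  finally show "Cv u w \<le> (C u2 v1' - C u2 v1) / (v1' - v1)" .
qed

definition tail_difference_quotient ::
  "(real \<Rightarrow> real \<Rightarrow> real) \<Rightarrow> real \<Rightarrow> (real \<Rightarrow> real) \<Rightarrow> real \<Rightarrow> real \<Rightarrow> real \<Rightarrow> real \<Rightarrow> real" where
  "tail_difference_quotient C \<kappa> l a b b' s =
     (C (a * s) (b' * s) - C (a * s) (b * s)) / (b' * s - b * s) / (s powr (\<kappa> - 1) * l s)"

lemma tail_difference_quotient_tendsto:
  fixes C \<tau> :: "real \<Rightarrow> real \<Rightarrow> real" and l :: "real \<Rightarrow> real"
  assumes C_tail: "\<And>u v. u \<ge> 0 \<Longrightarrow> v \<ge> 0 \<Longrightarrow>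
      ((\<lambda>t. C (u * t) (v * t) / (t powr \<kappa> * l t)) \<longlongrightarrow> \<tau> u v) (at_right 0)"
    and "0 \<le> a" "0 \<le> b" "b < b'"
  shows "(tail_difference_quotient C \<kappa> l a b b' \<longlongrightarrow> (\<tau> a b' - \<tau> a b) / (b' - b)) (at_right 0)"
proof -
  have "((\<lambda>s. (C (a * s) (b' * s) / (s powr \<kappa> * l s) - C (a * s) (b * s) / (s powr \<kappa> * l s))
      / (b' - b)) \<longlongrightarrow> (\<tau> a b' - \<tau> a b) / (b' - b)) (at_right 0)"
    using tendsto_divide[OF tendsto_diff[OF C_tail[of a b'] C_tail[of a b]] tendsto_const[of "b' - b"]]
      assms by simp
  moreover have "\<forall>\<^sub>F s in at_right 0.
      (C (a * s) (b' * s) / (s powr \<kappa> * l s) - C (a * s) (b * s) / (s powr \<kappa> * l s)) / (b' - b)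
    = tail_difference_quotient C \<kappa> l a b b' s"
    unfolding tail_difference_quotient_def
  proof (rule eventually_at_rightI[of 0 1])
    fix s :: real assume "s \<in> {0<..<1}"
    then have "s powr \<kappa> = s * s powr (\<kappa> - 1)"
      by (simp add: powr_mult_base)
    then have den: "s powr \<kappa> * l s * (b' - b) = (b' * s - b * s) * (s powr (\<kappa> - 1) * l s)"
      by (simp add: algebra_simps)
    show "(C (a * s) (b' * s) / (s powr \<kappa> * l s) - C (a * s) (b * s) / (s powr \<kappa> * l s)) / (b' - b)
      = (C (a * s) (b' * s) - C (a * s) (b * s)) / (b' * s - b * s) / (s powr (\<kappa> - 1) * l s)"
      by (simp only: diff_divide_distrib divide_divide_eq_left den)
  qed simp
  ultimately show ?thesis
    by (rule Lim_transform_eventually)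
qed

lemma tail_difference_quotient_eventually_near:
  assumes C_tail: "\<And>u v. u \<ge> 0 \<Longrightarrow> v \<ge> 0 \<Longrightarrow>
      ((\<lambda>t. C (u * t) (v * t) / (t powr \<kappa> * l t)) \<longlongrightarrow> \<tau> u v) (at_right 0)"
    and \<tau>_diff: "has_partials_on \<tau> \<tau>u \<tau>v ({0..} \<times> {0..})"
    and "0 \<le> a" "0 < b" "b < b'"
    and near: "\<And>z. b < z \<Longrightarrow> z < b' \<Longrightarrow> \<bar>\<tau>v a z - c\<bar> < e"
  shows "\<forall>\<^sub>F s in at_right 0. \<bar>tail_difference_quotient C \<kappa> l a b b' s - c\<bar> < e"
proof -
  obtain z where "b < z" "z < b'" and z: "(\<tau> a b' - \<tau> a b) / (b' - b) = \<tau>v a z"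
    using has_partials_on_quadrant_mvt_snd[OF \<tau>_diff] assms(3-5) by blast
  then have "c - e < \<tau>v a z" "\<tau>v a z < c + e"
    using near[of z] by (simp_all add: abs_less_iff)
  moreover have "(tail_difference_quotient C \<kappa> l a b b' \<longlongrightarrow> \<tau>v a z) (at_right 0)"
    unfolding z[symmetric] using assms(3-5)
    by (intro tail_difference_quotient_tendsto[where C = C and \<tau> = \<tau>, OF C_tail]) auto
  ultimately have "\<forall>\<^sub>F s in at_right 0. c - e < tail_difference_quotient C \<kappa> l a b b' s"
      "\<forall>\<^sub>F s in at_right 0. tail_difference_quotient C \<kappa> l a b b' s < c + e"
    by (simp_all add: order_tendstoD)
  then show ?thesis
    by eventually_elim (simp add: abs_less_iff)
qed

(* The interval of the upper quotient lies just below, that of the lower quotient just above,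
   the range (b - \<delta>, b + \<delta>) of w / s, as copula_partial_snd_between_difference_quotients needs. *)
lemma copula_partial_snd_tail_ratio_near:
  assumes C: "copula C" and C_diff: "has_partials_on C Cu Cv ({0..1} \<times> {0..1})"
    and Cv_mono: "\<And>u. u \<in> {0..1} \<Longrightarrow> antimono_on {0..1} (\<lambda>v. Cv u v)"
    and s: "0 < s" "0 < l s" "(a + \<delta>) * s < 1" "(b + 2 * \<delta>) * s < 1"
    and \<delta>: "0 < \<delta>" "\<delta> \<le> a" "2 * \<delta> < b"
    and u: "\<bar>u / s - a\<bar> < \<delta>" and w: "\<bar>w / s - b\<bar> < \<delta>"
    and upper: "\<bar>tail_difference_quotient C \<kappa> l (a + \<delta>) (b - 2 * \<delta>) (b - \<delta>) s - c\<bar> < e"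
    and lower: "\<bar>tail_difference_quotient C \<kappa> l (a - \<delta>) (b + \<delta>) (b + 2 * \<delta>) s - c\<bar> < e"
  shows "\<bar>Cv u w / (s powr (\<kappa> - 1) * l s) - c\<bar> < e"
proof -
  have "(a - \<delta>) * s \<le> u" "u \<le> (a + \<delta>) * s" "(b - \<delta>) * s \<le> w" "w \<le> (b + \<delta>) * s"
    using u w s by (auto simp: abs_less_iff field_simps)
  moreover have "0 \<le> (a - \<delta>) * s" "0 < (b - 2 * \<delta>) * s" "(b - 2 * \<delta>) * s < (b - \<delta>) * s"
      "(b + \<delta>) * s < (b + 2 * \<delta>) * s"
    using s \<delta> by (auto intro: mult_strict_right_mono)
  ultimately have
    "(C ((a - \<delta>) * s) ((b + 2 * \<delta>) * s) - C ((a - \<delta>) * s) ((b + \<delta>) * s))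
        / ((b + 2 * \<delta>) * s - (b + \<delta>) * s) \<le> Cv u w"
    "Cv u w \<le> (C ((a + \<delta>) * s) ((b - \<delta>) * s) - C ((a + \<delta>) * s) ((b - 2 * \<delta>) * s))
        / ((b - \<delta>) * s - (b - 2 * \<delta>) * s)"
    using copula_partial_snd_between_difference_quotients[OF C C_diff Cv_mono] s by (meson less_imp_le)+
  moreover have "0 < s powr (\<kappa> - 1) * l s"
    using s by simp
  ultimately have
    "tail_difference_quotient C \<kappa> l (a - \<delta>) (b + \<delta>) (b + 2 * \<delta>) s \<le> Cv u w / (s powr (\<kappa> - 1) * l s)"
    "Cv u w / (s powr (\<kappa> - 1) * l s) \<le> tail_difference_quotient C \<kappa> l (a + \<delta>) (b - 2 * \<delta>) (b - \<delta>) s"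
    unfolding tail_difference_quotient_def by (blast intro: divide_right_mono less_imp_le)+
  then show ?thesis
    using upper lower unfolding abs_less_iff by linarith
qed

lemma survival_function_of_cdf:
  fixes M :: "'a measure" and X :: "'a \<Rightarrow> real"
  assumes "prob_space M" "X \<in> borel_measurable M"
    and X_cdf: "\<And>x. measure M {\<omega>\<in>space M. X \<omega> \<le> x} = F x"
  shows "antimono (\<lambda>x. 1 - F x)" "\<And>x. 0 \<le> 1 - F x" "((\<lambda>x. 1 - F x) \<longlongrightarrow> 0) at_top"
proof -
  interpret real_distribution "distr M borel X"
    using prob_space.real_distribution_distr[OF assms(1,2)] .
  have F: "F = cdf (distr M borel X)"
  proof
    fix x
    have "cdf (distr M borel X) x = measure M (X -` {..x} \<inter> space M)"
      using assms by (simp add: cdf_def measure_distr)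
    also have "X -` {..x} \<inter> space M = {\<omega>\<in>space M. X \<omega> \<le> x}"
      by auto
    finally show "F x = cdf (distr M borel X) x"
      by (simp add: X_cdf)
  qed
  show "antimono (\<lambda>x. 1 - F x)"
    unfolding F by (intro antimonoI) (simp add: cdf_nondecreasing)
  show "\<And>x. 0 \<le> 1 - F x"
    unfolding F using cdf_bounded_prob by simp
  show "((\<lambda>x. 1 - F x) \<longlongrightarrow> 0) at_top"
    unfolding F using tendsto_diff[OF tendsto_const[of 1] cdf_lim_at_top_prob] by simp
qed

lemma regularly_varying_antimono_pos:
  assumes anti: "antimono g" and nonneg: "\<And>x. 0 \<le> g x" and RV: "regularly_varying g \<gamma>"
  shows "0 < g x"
proof (rule ccontr)
  assume "\<not> 0 < g x"
  then have zero: "g t = 0" if "x \<le> t" for t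
    using antimonoD[OF anti that] nonneg[of t] by linarith
  have "\<forall>\<^sub>F t in at_top. g t = 0"
    by (rule eventually_mono[OF eventually_ge_at_top[of x] zero])
  then have "((\<lambda>t. g (t * 2) / g t) \<longlongrightarrow> 0) at_top"
    by (rule tendsto_eventually[OF eventually_mono]) simp
  moreover have "((\<lambda>t. g (t * 2) / g t) \<longlongrightarrow> 2 powr \<gamma>) at_top"
    using RV unfolding regularly_varying_def by simp
  ultimately show False
    using tendsto_unique[OF trivial_limit_at_top_linorder] by fastforce
qed

lemma regularly_varying_antimono_locally_uniform:
  fixes f :: "real \<Rightarrow> real"
  assumes anti: "antimono f" and nonneg: "\<And>x. 0 \<le> f x" and RV: "regularly_varying f \<gamma>"
    and "0 < x0" "0 < \<delta>"
  shows "\<exists>U. open U \<and> x0 \<in> U \<and> (\<forall>x\<in>U. \<bar>x powr \<gamma> - x0 powr \<gamma>\<bar> < \<delta>) \<and>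
    (\<forall>\<^sub>F t in at_top. \<forall>x\<in>U. \<bar>f (t * x) / f t - x0 powr \<gamma>\<bar> < \<delta>)"
proof -
  have "continuous (at x0) (\<lambda>x. x powr \<gamma>)"
    using \<open>0 < x0\<close> by (intro continuous_intros) auto
  then obtain d where "0 < d" and d: "\<And>x. \<bar>x - x0\<bar> < d \<Longrightarrow> \<bar>x powr \<gamma> - x0 powr \<gamma>\<bar> < \<delta> / 2"
    using \<open>0 < \<delta>\<close> unfolding continuous_at_eps_delta dist_real_def by (meson half_gt_zero)
  define r where "r = min (d / 2) (x0 / 2)"
  have r: "0 < r" "r < x0"
    using \<open>0 < d\<close> \<open>0 < x0\<close> by (auto simp: r_def)
  have close: "\<bar>x powr \<gamma> - x0 powr \<gamma>\<bar> < \<delta> / 2" if "x \<in> {x0 - r..x0 + r}" for x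
    using that \<open>0 < d\<close> by (intro d) (auto simp: r_def abs_le_iff)
  define U where "U = {x0 - r<..<x0 + r}"
  have lim: "((\<lambda>t. f (t * x) / f t) \<longlongrightarrow> x powr \<gamma>) at_top" if "0 < x" for x
    using RV that unfolding regularly_varying_def by blast
  have "\<forall>\<^sub>F t in at_top. 0 < t \<and> f (t * (x0 - r)) / f t < (x0 - r) powr \<gamma> + \<delta> / 2 \<and>
      (x0 + r) powr \<gamma> - \<delta> / 2 < f (t * (x0 + r)) / f t"
    using eventually_gt_at_top[of 0] r \<open>0 < \<delta>\<close>
      order_tendstoD(2)[OF lim[of "x0 - r"], of "(x0 - r) powr \<gamma> + \<delta> / 2"]
      order_tendstoD(1)[OF lim[of "x0 + r"], of "(x0 + r) powr \<gamma> - \<delta> / 2"]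
    by (auto simp: eventually_conj_iff)
  then have "\<forall>\<^sub>F t in at_top. \<forall>x\<in>U. \<bar>f (t * x) / f t - x0 powr \<gamma>\<bar> < \<delta>"
  proof (rule eventually_mono, intro ballI)
    fix t x assume t: "0 < t \<and> f (t * (x0 - r)) / f t < (x0 - r) powr \<gamma> + \<delta> / 2 \<and>
      (x0 + r) powr \<gamma> - \<delta> / 2 < f (t * (x0 + r)) / f t" and "x \<in> U"
    then have "f (t * (x0 + r)) \<le> f (t * x)" "f (t * x) \<le> f (t * (x0 - r))"
      by (auto simp: U_def intro!: antimonoD[OF anti])
    then have "f (t * (x0 + r)) / f t \<le> f (t * x) / f t" "f (t * x) / f t \<le> f (t * (x0 - r)) / f t"
      using nonneg by (auto intro: divide_right_mono)
    moreover have "\<bar>(x0 - r) powr \<gamma> - x0 powr \<gamma>\<bar> < \<delta> / 2" "\<bar>(x0 + r) powr \<gamma> - x0 powr \<gamma>\<bar> < \<delta> / 2"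
      using r by (intro close; simp)+
    ultimately show "\<bar>f (t * x) / f t - x0 powr \<gamma>\<bar> < \<delta>"
      using t by linarith
  qed
  moreover have "\<forall>x\<in>U. \<bar>x powr \<gamma> - x0 powr \<gamma>\<bar> < \<delta>"
  proof
    fix x assume "x \<in> U"
    then have "x \<in> {x0 - r..x0 + r}"
      by (simp add: U_def)
    from close[OF this] show "\<bar>x powr \<gamma> - x0 powr \<gamma>\<bar> < \<delta>"
      using \<open>0 < \<delta>\<close> by simp
  qed
  moreover have "open U" "x0 \<in> U"
    using r by (auto simp: U_def)
  ultimately show ?thesis
    by blast
qed

lemma copula_partial_snd_tail_ratio_eventually_near:
  fixes C Cu Cv \<tau> \<tau>u \<tau>v :: "real \<Rightarrow> real \<Rightarrow> real" and f l :: "real \<Rightarrow> real"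
  assumes C: "copula C" and C_diff: "has_partials_on C Cu Cv ({0..1} \<times> {0..1})"
    and Cv_mono: "\<And>u. u \<in> {0..1} \<Longrightarrow> antimono_on {0..1} (\<lambda>v. Cv u v)"
    and \<tau>_diff: "has_partials_on \<tau> \<tau>u \<tau>v ({0..} \<times> {0..})"
    and C_tail: "\<And>u v. u \<ge> 0 \<Longrightarrow> v \<ge> 0 \<Longrightarrow>
      ((\<lambda>t. C (u * t) (v * t) / (t powr \<kappa> * l t)) \<longlongrightarrow> \<tau> u v) (at_right 0)"
    and l_pos: "\<And>s. 0 < s \<Longrightarrow> 0 < l s"
    and f_pos: "\<And>x. 0 < f x" and f_lim: "(f \<longlongrightarrow> 0) at_top"
    and \<delta>: "0 < \<delta>" "\<delta> \<le> a" "2 * \<delta> < b"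
    and near: "\<And>a' b'. \<bar>a' - a\<bar> < 2 * \<delta> \<Longrightarrow> \<bar>b' - b\<bar> < 2 * \<delta> \<Longrightarrow> \<bar>\<tau>v a' b' - c\<bar> < e"
  shows "\<forall>\<^sub>F t in at_top. \<forall>u w. \<bar>u / f t - a\<bar> < \<delta> \<longrightarrow> \<bar>w / f t - b\<bar> < \<delta> \<longrightarrow>
    \<bar>Cv u w / (f t powr (\<kappa> - 1) * l (f t)) - c\<bar> < e"
proof -
  have "\<forall>\<^sub>F s in at_right 0.
      \<bar>tail_difference_quotient C \<kappa> l (a + \<delta>) (b - 2 * \<delta>) (b - \<delta>) s - c\<bar> < e \<and>
      \<bar>tail_difference_quotient C \<kappa> l (a - \<delta>) (b + \<delta>) (b + 2 * \<delta>) s - c\<bar> < e"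
    unfolding eventually_conj_iff using \<delta>
    by (intro conjI tail_difference_quotient_eventually_near[OF C_tail \<tau>_diff] near) auto
  moreover have "filterlim f (at_right 0) at_top"
    using tendsto_imp_filterlim_at_right[OF f_lim] f_pos by simp
  ultimately have "\<forall>\<^sub>F t in at_top.
      \<bar>tail_difference_quotient C \<kappa> l (a + \<delta>) (b - 2 * \<delta>) (b - \<delta>) (f t) - c\<bar> < e \<and>
      \<bar>tail_difference_quotient C \<kappa> l (a - \<delta>) (b + \<delta>) (b + 2 * \<delta>) (f t) - c\<bar> < e"
    by (rule eventually_compose_filterlim)
  moreover have "\<forall>\<^sub>F t in at_top. f t * (a + \<delta>) < 1 \<and> f t * (b + 2 * \<delta>) < 1"
    using order_tendstoD(2)[OF tendsto_mult_left_zero[OF f_lim, of "a + \<delta>"], of 1]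
      order_tendstoD(2)[OF tendsto_mult_left_zero[OF f_lim, of "b + 2 * \<delta>"], of 1]
    by (simp add: eventually_conj_iff)
  ultimately show ?thesis
  proof eventually_elim
    case (elim t)
    have s: "0 < f t" "0 < l (f t)" "(a + \<delta>) * f t < 1" "(b + 2 * \<delta>) * f t < 1"
      using elim(2) f_pos l_pos by (simp_all add: mult.commute)
    show ?case
      using elim(1) \<delta>
      by (blast intro: copula_partial_snd_tail_ratio_near[where l = l, OF C C_diff Cv_mono s \<delta>(1)])
  qed
qed

lemma copula_partial_snd_locally_uniform:
  fixes C Cu Cv \<tau> \<tau>u \<tau>v :: "real \<Rightarrow> real \<Rightarrow> real" and f l :: "real \<Rightarrow> real"
  assumes C: "copula C" and C_diff: "has_partials_on C Cu Cv ({0..1} \<times> {0..1})"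
    and Cv_mono: "\<And>u. u \<in> {0..1} \<Longrightarrow> antimono_on {0..1} (\<lambda>v. Cv u v)"
    and \<tau>_diff: "has_partials_on \<tau> \<tau>u \<tau>v ({0..} \<times> {0..})"
    and \<tau>v_cont: "continuous_on ({0..} \<times> {0..}) (\<lambda>p. \<tau>v (fst p) (snd p))"
    and C_tail: "\<And>u v. u \<ge> 0 \<Longrightarrow> v \<ge> 0 \<Longrightarrow>
      ((\<lambda>t. C (u * t) (v * t) / (t powr \<kappa> * l t)) \<longlongrightarrow> \<tau> u v) (at_right 0)"
    and l_pos: "\<And>s. 0 < s \<Longrightarrow> 0 < l s"
    and f_anti: "antimono f" and f_pos: "\<And>x. 0 < f x" and f_lim: "(f \<longlongrightarrow> 0) at_top"
    and f_RV: "regularly_varying f (- \<alpha>)"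
    and "0 < x0" "0 < y0" "0 < \<epsilon>"
  shows "\<exists>U. open U \<and> (x0, y0) \<in> U \<and> (\<forall>\<^sub>F t in at_top. \<forall>(x, y)\<in>U.
    \<bar>Cv (f (x * t)) (f (y * t)) / (f t powr (\<kappa> - 1) * l (f t)) - \<tau>v (x powr - \<alpha>) (y powr - \<alpha>)\<bar> < \<epsilon>)"
proof -
  define a b where "a = x0 powr - \<alpha>" and "b = y0 powr - \<alpha>"
  have "0 < a" "0 < b"
    using \<open>0 < x0\<close> \<open>0 < y0\<close> by (simp_all add: a_def b_def)
  then obtain d where "0 < d" "d \<le> a" "d \<le> b" and \<tau>v_near:
      "\<And>a' b'. \<bar>a' - a\<bar> < d \<Longrightarrow> \<bar>b' - b\<bar> < d \<Longrightarrow> \<bar>\<tau>v a' b' - \<tau>v a b\<bar> < \<epsilon> / 2"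
    using continuous_on_quadrant_box[OF \<tau>v_cont, of a b "\<epsilon> / 2"] \<open>0 < \<epsilon>\<close> by auto
  define \<delta> where "\<delta> = d / 3"
  have \<delta>: "0 < \<delta>" "\<delta> \<le> a" "2 * \<delta> < b" "2 * \<delta> < d"
    using \<open>0 < d\<close> \<open>d \<le> a\<close> \<open>d \<le> b\<close> by (simp_all add: \<delta>_def)
  obtain Ux where Ux: "open Ux" "x0 \<in> Ux" "\<forall>x\<in>Ux. \<bar>x powr - \<alpha> - a\<bar> < \<delta>"
      "\<forall>\<^sub>F t in at_top. \<forall>x\<in>Ux. \<bar>f (t * x) / f t - a\<bar> < \<delta>"
    using regularly_varying_antimono_locally_uniform[OF f_anti less_imp_le[OF f_pos] f_RV \<open>0 < x0\<close> \<delta>(1)]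
    unfolding a_def by blast
  obtain Uy where Uy: "open Uy" "y0 \<in> Uy" "\<forall>y\<in>Uy. \<bar>y powr - \<alpha> - b\<bar> < \<delta>"
      "\<forall>\<^sub>F t in at_top. \<forall>y\<in>Uy. \<bar>f (t * y) / f t - b\<bar> < \<delta>"
    using regularly_varying_antimono_locally_uniform[OF f_anti less_imp_le[OF f_pos] f_RV \<open>0 < y0\<close> \<delta>(1)]
    unfolding b_def by blast
  have "\<forall>\<^sub>F t in at_top. \<forall>u w. \<bar>u / f t - a\<bar> < \<delta> \<longrightarrow> \<bar>w / f t - b\<bar> < \<delta> \<longrightarrow>
      \<bar>Cv u w / (f t powr (\<kappa> - 1) * l (f t)) - \<tau>v a b\<bar> < \<epsilon> / 2"
    using \<delta> by (intro copula_partial_snd_tail_ratio_eventually_near[OF C C_diff Cv_mono \<tau>_diff C_tail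
        l_pos f_pos f_lim] \<tau>v_near) auto
  then have "\<forall>\<^sub>F t in at_top. \<forall>(x, y)\<in>Ux \<times> Uy.
    \<bar>Cv (f (x * t)) (f (y * t)) / (f t powr (\<kappa> - 1) * l (f t)) - \<tau>v (x powr - \<alpha>) (y powr - \<alpha>)\<bar> < \<epsilon>"
    using Ux(4) Uy(4)
  proof eventually_elim
    case (elim t)
    have "\<bar>\<tau>v (x powr - \<alpha>) (y powr - \<alpha>) - \<tau>v a b\<bar> < \<epsilon> / 2" if "x \<in> Ux" "y \<in> Uy" for x y
      using Ux(3) Uy(3) that \<delta> by (intro \<tau>v_near) auto
    with elim show ?case
      unfolding abs_less_iff by (fastforce simp: mult.commute)
  qed
  moreover have "open (Ux \<times> Uy)" "(x0, y0) \<in> Ux \<times> Uy"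
    using Ux Uy by (auto intro: open_Times)
  ultimately show ?thesis
    by blast
qed

lemma uniform_limit_compactI:
  assumes "compact S"
    and local: "\<And>p e. p \<in> S \<Longrightarrow> e > 0 \<Longrightarrow>
      \<exists>U. open U \<and> p \<in> U \<and> (\<forall>\<^sub>F n in F. \<forall>x\<in>U \<inter> S. dist (f n x) (g x) < e)"
  shows "uniform_limit S f g F"
proof (rule uniform_limitI)
  fix e :: real assume "e > 0"
  then have "\<forall>p\<in>S. \<exists>U. open U \<and> p \<in> U \<and> (\<forall>\<^sub>F n in F. \<forall>x\<in>U \<inter> S. dist (f n x) (g x) < e)"
    using local by blast
  then obtain U where U: "\<forall>p\<in>S. open (U p) \<and> p \<in> U p \<and>
      (\<forall>\<^sub>F n in F. \<forall>x\<in>U p \<inter> S. dist (f n x) (g x) < e)"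
    by (rule bchoice[THEN exE])
  obtain S' where S': "S' \<subseteq> S" "finite S'" "S \<subseteq> (\<Union>p\<in>S'. U p)"
  proof (rule compactE_image[OF \<open>compact S\<close>, of S U])
    show "\<And>p. p \<in> S \<Longrightarrow> open (U p)" "S \<subseteq> (\<Union>p\<in>S. U p)"
      using U by blast+
  qed (rule that)
  have "\<forall>p\<in>S'. \<forall>\<^sub>F n in F. \<forall>x\<in>U p \<inter> S. dist (f n x) (g x) < e"
    using U S'(1) by blast
  then have "\<forall>\<^sub>F n in F. \<forall>p\<in>S'. \<forall>x\<in>U p \<inter> S. dist (f n x) (g x) < e"
    by (rule eventually_ball_finite[OF S'(2)])
  then show "\<forall>\<^sub>F n in F. \<forall>x\<in>S. dist (f n x) (g x) < e"
    by (rule eventually_mono) (use S'(3) in blast)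
qed

theorem mainTheorem10:
  fixes M :: "'a measure" and X Y :: "'a \<Rightarrow> real"
    and F :: "real \<Rightarrow> real" and \<alpha> :: real
    and C Cu Cv Cuu Cuv Cvu Cvv :: "real \<Rightarrow> real \<Rightarrow> real"
    and \<kappa> :: real and l :: "real \<Rightarrow> real"
    and \<tau> \<tau>u \<tau>v :: "real \<Rightarrow> real \<Rightarrow> real"
    and B :: "(real \<times> real) set"
  assumes M: "prob_space M"
    and X_rv: "X \<in> borel_measurable M" and Y_rv: "Y \<in> borel_measurable M"
    and X_nonneg: "AE \<omega> in M. X \<omega> \<ge> 0" and Y_nonneg: "AE \<omega> in M. Y \<omega> \<ge> 0"
    and X_cdf: "\<And>x. measure M {\<omega>\<in>space M. X \<omega> \<le> x} = F x"
    and Y_cdf: "\<And>x. measure M {\<omega>\<in>space M. Y \<omega> \<le> x} = F x"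
    and F_cont: "continuous_on UNIV F"
    and \<alpha>_pos: "\<alpha> > 0"
    and F_RV: "regularly_varying (\<lambda>x. 1 - F x) (- \<alpha>)"
    and C_copula: "copula C"
    and C_surv: "\<And>x y. measure M {\<omega>\<in>space M. X \<omega> > x \<and> Y \<omega> > y}
                        = C (1 - F x) (1 - F y)"
    and C_sym: "\<And>u v. u \<in> {0..1} \<Longrightarrow> v \<in> {0..1} \<Longrightarrow> C u v = C v u"
    and C_diff: "has_partials_on C Cu Cv ({0..1} \<times> {0..1})"
    and Cu_diff: "has_partials_on Cu Cuu Cuv ({0..1} \<times> {0..1})"
    and Cv_diff: "has_partials_on Cv Cvu Cvv ({0..1} \<times> {0..1})"
    and \<kappa>_range: "1 \<le> \<kappa>" "\<kappa> \<le> 2"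
    and l_SV: "slowly_varying_at_0 l"
    and \<tau>_diff: "has_partials_on \<tau> \<tau>u \<tau>v ({0..} \<times> {0..})"
    and \<tau>u_cont: "continuous_on ({0..} \<times> {0..}) (\<lambda>p. \<tau>u (fst p) (snd p))"
    and \<tau>v_cont: "continuous_on ({0..} \<times> {0..}) (\<lambda>p. \<tau>v (fst p) (snd p))"
    and \<tau>_nonzero: "\<exists>u\<ge>0. \<exists>v\<ge>0. \<tau> u v \<noteq> 0"
    and C_tail: "\<And>u v. u \<ge> 0 \<Longrightarrow> v \<ge> 0 \<Longrightarrow>
        ((\<lambda>t. C (u * t) (v * t) / (t powr \<kappa> * l t)) \<longlongrightarrow> \<tau> u v) (at_right 0)"
    and Cu_mono: "\<And>v. v \<in> {0..1} \<Longrightarrow> antimono_on {0..1} (\<lambda>u. Cu u v)"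
    and Cv_mono: "\<And>u. u \<in> {0..1} \<Longrightarrow> antimono_on {0..1} (\<lambda>v. Cv u v)"
    and B_compact: "compact B" and B_sub: "B \<subseteq> {0<..} \<times> {0<..}"
  shows "uniform_limit B
           (\<lambda>t (x, y). Cv (1 - F (x * t)) (1 - F (y * t))
                         / ((1 - F t) powr (\<kappa> - 1) * l (1 - F t)))
           (\<lambda>(x, y). \<tau>v (x powr (- \<alpha>)) (y powr (- \<alpha>)))
           at_top"
proof -
  have f: "antimono (\<lambda>x. 1 - F x)" "\<And>x. 0 \<le> 1 - F x" "((\<lambda>x. 1 - F x) \<longlongrightarrow> 0) at_top"
    by (rule survival_function_of_cdf[OF M X_rv X_cdf])+
  have f_pos: "\<And>x. 0 < 1 - F x"
    by (rule regularly_varying_antimono_pos[OF f(1,2) F_RV])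
  have l_pos: "\<And>s. 0 < s \<Longrightarrow> 0 < l s"
    using l_SV by (simp add: slowly_varying_at_0_def)
  show ?thesis
  proof (rule uniform_limit_compactI[OF B_compact], goal_cases)
    case (1 p e)
    then obtain x0 y0 where p: "p = (x0, y0)" "0 < x0" "0 < y0"
      using B_sub by force
    obtain U where "open U" "p \<in> U" and U: "\<forall>\<^sub>F t in at_top. \<forall>(x, y)\<in>U.
        \<bar>Cv (1 - F (x * t)) (1 - F (y * t)) / ((1 - F t) powr (\<kappa> - 1) * l (1 - F t))
          - \<tau>v (x powr - \<alpha>) (y powr - \<alpha>)\<bar> < e"
      using copula_partial_snd_locally_uniform[OF C_copula C_diff Cv_mono \<tau>_diff \<tau>v_cont C_tail
          l_pos f(1) f_pos f(3) F_RV p(2,3) \<open>0 < e\<close>] p(1) by blast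
    show ?case
      by (intro exI[of _ U] conjI \<open>open U\<close> \<open>p \<in> U\<close> eventually_mono[OF U]) (auto simp: dist_real_def)
  qed
qed

end
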